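(* Let $x$ be an $n\times n$ matrix of indeterminates over $\mathbb{Z}$, let $\Delta_i(x)$ be the determinant of the matrix obtained from $x$ by removing the first $i$ rows and the first $i$ columns, and let $\Delta(x)=\prod_{i=1}^{n-1}\Delta_i(x)$. Let $W$ be the group of all $n\times n$ matrices obtained from the identity matrix $1_n$ by permuting its columns. Then there exist $w_0,\dots,w_N\in W$, elements $a_1(x),\dots,a_N(x)\in\mathbb{Z}[x,\Delta(x)^{-1}]$ and $1\times(n-1)$ vectors $b_1(x),\dots,b_N(x)\in\mathbb{Z}[x,\Delta(x)^{-1}]^{n-1}$ such that, setting $$s_i(x)=\begin{pmatrix}a_i(x)&b_i(x)\\0&1_{n-1}\end{pmatrix},$$ one has $$x=w_0\cdot s_1(x)\cdot w_1\cdot s_2(x)\cdot w_2\cdots s_N(x)\cdot w_N.$$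
   Context: $\mathbb{Z}[x,\Delta(x)^{-1}]$ denotes the polynomial ring over $\mathbb{Z}$ in the $n^2$ entries of $x$, localized at $\Delta(x)$; $1_{n-1}$ is the $(n-1)\times(n-1)$ identity matrix. *)

theory Defs
  imports "Jordan_Normal_Form.Determinant"
begin

text \<open>The ring Z[x] of integer polynomials in the n^2 entries of an n x n matrix,
  realised as the (injective) image in functions on rational matrices.\<close>
inductive_set int_polyfun :: "nat \<Rightarrow> (rat mat \<Rightarrow> rat) set" for n :: nat where
  const: "(\<lambda>x. of_int c) \<in> int_polyfun n"
| var: "i < n \<Longrightarrow> j < n \<Longrightarrow> (\<lambda>x. x $$ (i, j)) \<in> int_polyfun n"
| add: "p \<in> int_polyfun n \<Longrightarrow> q \<in> int_polyfun n \<Longrightarrow> (\<lambda>x. p x + q x) \<in> int_polyfun n"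
| mult: "p \<in> int_polyfun n \<Longrightarrow> q \<in> int_polyfun n \<Longrightarrow> (\<lambda>x. p x * q x) \<in> int_polyfun n"

definition Delta_i :: "nat \<Rightarrow> nat \<Rightarrow> rat mat \<Rightarrow> rat" where
  "Delta_i n i x = det (mat (n - i) (n - i) (\<lambda>(r, c). x $$ (r + i, c + i)))"

definition Delta :: "nat \<Rightarrow> rat mat \<Rightarrow> rat" where
  "Delta n x = (\<Prod>i\<in>{1..n-1}. Delta_i n i x)"

text \<open>Elements of Z[x, Delta(x)^-1], as functions on matrices with Delta(x) \<noteq> 0.\<close>
definition loc_fun :: "nat \<Rightarrow> (rat mat \<Rightarrow> rat) \<Rightarrow> bool" where
  "loc_fun n f \<longleftrightarrow> (\<exists>p \<in> int_polyfun n. \<exists>k::nat.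
      \<forall>x \<in> carrier_mat n n. Delta n x \<noteq> 0 \<longrightarrow> f x = p x / Delta n x ^ k)"

definition perm_mats :: "nat \<Rightarrow> rat mat set" where
  "perm_mats n = {mat n n (\<lambda>(r, c). if r = \<sigma> c then 1 else 0) | \<sigma>. \<sigma> permutes {..<n}}"

text \<open>The block matrix ((a, b), (0, 1_{n-1})), with b indexed by 0..n-2.\<close>
definition s_mat :: "nat \<Rightarrow> rat \<Rightarrow> (nat \<Rightarrow> rat) \<Rightarrow> rat mat" where
  "s_mat n a b = mat n n (\<lambda>(r, c).
     if r = 0 then (if c = 0 then a else b (c - 1))
     else if c = 0 then 0 else if r = c then 1 else 0)"

fun chain :: "(nat \<Rightarrow> rat mat) \<Rightarrow> (nat \<Rightarrow> rat mat) \<Rightarrow> nat \<Rightarrow> rat mat" where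
  "chain w s 0 = w 0"
| "chain w s (Suc N) = chain w s N * s (Suc N) * w (Suc N)"

end

theory Submission
  imports Defs
begin

text \<open>Eliminate the rows of \<open>x\<close> from the top. Let \<open>x\<^sub>k\<close> be \<open>x\<close> with its first \<open>k\<close> rows
  replaced by those of the identity. Then \<open>x\<^sub>k = R\<^sub>k x\<^sub>k\<^sub>+\<^sub>1\<close>, where \<open>R\<^sub>k\<close> is the identity
  with its \<open>k\<close>-th row replaced by a row vector \<open>v\<close>: the entries of \<open>v\<close> right of the
  diagonal must solve a linear system whose matrix is the trailing submatrix of determinant
  \<open>\<Delta>\<^sub>k\<^sub>+\<^sub>1(x)\<close>, so by Cramer's rule they lie in \<open>\<int>[x, \<Delta>(x)\<^sup>-\<^sup>1]\<close>, and the remaining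
  entries of \<open>v\<close> then correct columns \<open>0, \<dots>, k\<close>. Hence \<open>x = R\<^sub>0 \<cdots> R\<^sub>n\<^sub>-\<^sub>1\<close>. Conjugating
  by the transposition of \<open>0\<close> and \<open>k\<close> turns \<open>R\<^sub>k\<close> into a matrix of the shape \<open>s(x)\<close>, and the
  products of consecutive transpositions are the permutation matrices \<open>w\<^sub>i\<close>.\<close>

lemma int_polyfun_sum:
  "finite A \<Longrightarrow> (\<And>a. a \<in> A \<Longrightarrow> f a \<in> int_polyfun n) \<Longrightarrow>
    (\<lambda>x. \<Sum>a\<in>A. f a x) \<in> int_polyfun n"
  by (induction A rule: finite_induct)
    (auto intro: int_polyfun.add int_polyfun.const[of 0, simplified])

lemma int_polyfun_prod:
  "finite A \<Longrightarrow> (\<And>a. a \<in> A \<Longrightarrow> f a \<in> int_polyfun n) \<Longrightarrow>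
    (\<lambda>x. \<Prod>a\<in>A. f a x) \<in> int_polyfun n"
  by (induction A rule: finite_induct)
    (auto intro: int_polyfun.mult int_polyfun.const[of 1, simplified])

lemma int_polyfun_power: "p \<in> int_polyfun n \<Longrightarrow> (\<lambda>x. p x ^ k) \<in> int_polyfun n"
  by (induction k) (auto intro: int_polyfun.mult int_polyfun.const[of 1, simplified])

lemma int_polyfun_det:
  assumes B: "\<And>x. B x \<in> carrier_mat m m"
    and entries: "\<And>r c. r < m \<Longrightarrow> c < m \<Longrightarrow> (\<lambda>x. B x $$ (r, c)) \<in> int_polyfun n"
  shows "(\<lambda>x. det (B x)) \<in> int_polyfun n"
proof -
  have "(\<lambda>x. signof p * (\<Prod>i=0..<m. B x $$ (i, p i))) \<in> int_polyfun n"
    if "p permutes {0..<m}" for p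
    using permutes_in_image[OF that]
    by (intro int_polyfun.mult[OF int_polyfun.const] int_polyfun_prod entries) auto
  then have "(\<lambda>x. \<Sum>p\<in>{p. p permutes {0..<m}}. signof p * (\<Prod>i=0..<m. B x $$ (i, p i)))
      \<in> int_polyfun n"
    by (intro int_polyfun_sum finite_permutations) auto
  then show ?thesis
    by (simp add: det_def'[OF B])
qed

lemma int_polyfun_adj_mat:
  assumes B: "\<And>x. B x \<in> carrier_mat m m"
    and entries: "\<And>r c. r < m \<Longrightarrow> c < m \<Longrightarrow> (\<lambda>x. B x $$ (r, c)) \<in> int_polyfun n"
    and "r < m" "c < m"
  shows "(\<lambda>x. adj_mat (B x) $$ (r, c)) \<in> int_polyfun n"
proof -
  have "(\<lambda>x. det (mat_delete (B x) c r)) \<in> int_polyfun n"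
  proof (rule int_polyfun_det)
    show "mat_delete (B x) c r \<in> carrier_mat (m - 1) (m - 1)" for x
      by (rule mat_delete_carrier[OF B])
    show "(\<lambda>x. mat_delete (B x) c r $$ (i, j)) \<in> int_polyfun n" if "i < m - 1" "j < m - 1" for i j
    proof -
      have "mat_delete (B x) c r $$ (i, j)
          = B x $$ (if i < c then i else Suc i, if j < r then j else Suc j)" for x
        using that B[of x] by (simp add: mat_delete_def)
      then show ?thesis
        using that by (simp add: entries)
    qed
  qed
  then have "(\<lambda>x. (-1) ^ (c + r) * det (mat_delete (B x) c r)) \<in> int_polyfun n"
    using int_polyfun.mult[OF int_polyfun.const[of "(-1) ^ (c + r)"]] by simp
  moreover have "adj_mat (B x) $$ (r, c) = (-1) ^ (c + r) * det (mat_delete (B x) c r)" for x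
    using B[of x] assms(3,4) by (simp add: adj_mat_def cofactor_def)
  ultimately show ?thesis by simp
qed

definition trailing_submat :: "nat \<Rightarrow> nat \<Rightarrow> rat mat \<Rightarrow> rat mat" where
  "trailing_submat n i x = mat (n - i) (n - i) (\<lambda>(r, c). x $$ (r + i, c + i))"

lemma trailing_submat_carrier: "trailing_submat n i x \<in> carrier_mat (n - i) (n - i)"
  by (simp add: trailing_submat_def)

lemma Delta_i_eq_det: "Delta_i n i x = det (trailing_submat n i x)"
  by (simp add: Delta_i_def trailing_submat_def)

lemma int_polyfun_trailing_submat:
  "r < n - i \<Longrightarrow> c < n - i \<Longrightarrow> (\<lambda>x. trailing_submat n i x $$ (r, c)) \<in> int_polyfun n"
  by (simp add: trailing_submat_def int_polyfun.var)

lemma int_polyfun_Delta_i: "Delta_i n i \<in> int_polyfun n"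
  unfolding Delta_i_eq_det[abs_def]
  by (rule int_polyfun_det[OF trailing_submat_carrier int_polyfun_trailing_submat])

lemma int_polyfun_Delta: "Delta n \<in> int_polyfun n"
  unfolding Delta_def[abs_def] by (intro int_polyfun_prod int_polyfun_Delta_i) simp

lemma Delta_i_self [simp]: "Delta_i n n x = 1"
proof -
  have "trailing_submat n n x = 1\<^sub>m 0"
    by (rule eq_matI) (auto simp: trailing_submat_def)
  then show ?thesis by (simp add: Delta_i_eq_det)
qed

lemma Delta_i_nonzero: "Delta n x \<noteq> 0 \<Longrightarrow> 1 \<le> i \<Longrightarrow> i \<le> n \<Longrightarrow> Delta_i n i x \<noteq> 0"
  by (cases "i = n") (auto simp: Delta_def)

lemma loc_funI:
  assumes "p \<in> int_polyfun n"
    and "\<And>x. x \<in> carrier_mat n n \<Longrightarrow> Delta n x \<noteq> 0 \<Longrightarrow> f x = p x / Delta n x ^ k"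
  shows "loc_fun n f"
  using assms unfolding loc_fun_def by blast

lemma loc_funE:
  assumes "loc_fun n f"
  obtains p k where "p \<in> int_polyfun n"
    and "\<And>x. x \<in> carrier_mat n n \<Longrightarrow> Delta n x \<noteq> 0 \<Longrightarrow> f x = p x / Delta n x ^ k"
  using assms unfolding loc_fun_def by blast

lemma loc_fun_int_polyfun: "p \<in> int_polyfun n \<Longrightarrow> loc_fun n p"
  by (rule loc_funI[where k = 0]) simp_all

lemma loc_fun_add:
  assumes "loc_fun n f" "loc_fun n g"
  shows "loc_fun n (\<lambda>x. f x + g x)"
proof -
  obtain p k where p: "p \<in> int_polyfun n"
    and f: "\<And>x. x \<in> carrier_mat n n \<Longrightarrow> Delta n x \<noteq> 0 \<Longrightarrow> f x = p x / Delta n x ^ k"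
    using loc_funE[OF assms(1)] by blast
  obtain q l where q: "q \<in> int_polyfun n"
    and g: "\<And>x. x \<in> carrier_mat n n \<Longrightarrow> Delta n x \<noteq> 0 \<Longrightarrow> g x = q x / Delta n x ^ l"
    using loc_funE[OF assms(2)] by blast
  show ?thesis
  proof (rule loc_funI)
    show "(\<lambda>x. p x * Delta n x ^ l + q x * Delta n x ^ k) \<in> int_polyfun n"
      by (intro int_polyfun.add int_polyfun.mult p q int_polyfun_power int_polyfun_Delta)
    fix x assume "x \<in> carrier_mat n n" "Delta n x \<noteq> 0"
    then show "f x + g x = (p x * Delta n x ^ l + q x * Delta n x ^ k) / Delta n x ^ (k + l)"
      by (simp add: f g add_frac_eq power_add)
  qed
qed

lemma loc_fun_mult:
  assumes "loc_fun n f" "loc_fun n g"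
  shows "loc_fun n (\<lambda>x. f x * g x)"
proof -
  obtain p k where p: "p \<in> int_polyfun n"
    and f: "\<And>x. x \<in> carrier_mat n n \<Longrightarrow> Delta n x \<noteq> 0 \<Longrightarrow> f x = p x / Delta n x ^ k"
    using loc_funE[OF assms(1)] by blast
  obtain q l where q: "q \<in> int_polyfun n"
    and g: "\<And>x. x \<in> carrier_mat n n \<Longrightarrow> Delta n x \<noteq> 0 \<Longrightarrow> g x = q x / Delta n x ^ l"
    using loc_funE[OF assms(2)] by blast
  show ?thesis
  proof (rule loc_funI)
    show "(\<lambda>x. p x * q x) \<in> int_polyfun n"
      by (intro int_polyfun.mult p q)
    fix x assume "x \<in> carrier_mat n n" "Delta n x \<noteq> 0"
    then show "f x * g x = p x * q x / Delta n x ^ (k + l)"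
      by (simp add: f g power_add)
  qed
qed

lemma loc_fun_diff:
  assumes "loc_fun n f" "loc_fun n g"
  shows "loc_fun n (\<lambda>x. f x - g x)"
proof -
  have "loc_fun n (\<lambda>x. f x + of_int (-1) * g x)"
    by (intro loc_fun_add loc_fun_mult loc_fun_int_polyfun int_polyfun.const assms)
  then show ?thesis by simp
qed

lemma loc_fun_sum:
  "finite A \<Longrightarrow> (\<And>a. a \<in> A \<Longrightarrow> loc_fun n (f a)) \<Longrightarrow> loc_fun n (\<lambda>x. \<Sum>a\<in>A. f a x)"
  by (induction A rule: finite_induct)
    (auto intro: loc_fun_add loc_fun_int_polyfun int_polyfun.const[of 0, simplified])

lemma loc_fun_divide_Delta_i:
  assumes p: "p \<in> int_polyfun n" and i: "1 \<le> i" "i \<le> n"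
  shows "loc_fun n (\<lambda>x. p x / Delta_i n i x)"
proof (cases "i = n")
  case True
  then show ?thesis using loc_fun_int_polyfun[OF p] by simp
next
  case False
  define q where "q x = (\<Prod>j\<in>{1..n-1} - {i}. Delta_i n j x)" for x
  have Delta_q: "Delta n x = Delta_i n i x * q x" for x
    unfolding Delta_def q_def using i False by (subst prod.remove[of _ i]) auto
  show ?thesis
  proof (rule loc_funI[where k = 1])
    show "(\<lambda>x. p x * q x) \<in> int_polyfun n"
      unfolding q_def by (intro int_polyfun.mult p int_polyfun_prod int_polyfun_Delta_i) simp
    show "p x / Delta_i n i x = p x * q x / Delta n x ^ 1" if "Delta n x \<noteq> 0" for x
      using that by (auto simp: Delta_q)
  qed
qed

lemma adj_mat_solve_row:
  fixes D :: "'a :: field mat"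
  assumes D: "D \<in> carrier_mat m m" and det: "det D \<noteq> 0" and c: "c < m"
  shows "(\<Sum>r<m. (\<Sum>j<m. y j * adj_mat D $$ (j, r)) / det D * D $$ (r, c)) = y c"
proof -
  have adj_D: "(\<Sum>r<m. adj_mat D $$ (j, r) * D $$ (r, c)) = (if j = c then det D else 0)"
    if "j < m" for j
  proof -
    have "(adj_mat D * D) $$ (j, c) = (det D \<cdot>\<^sub>m 1\<^sub>m m) $$ (j, c)"
      by (simp add: adj_mat(3)[OF D])
    then show ?thesis
      using that c D adj_mat(1)[OF D] by (simp add: scalar_prod_def atLeast0LessThan)
  qed
  have "(\<Sum>r<m. (\<Sum>j<m. y j * adj_mat D $$ (j, r)) / det D * D $$ (r, c))
      = (\<Sum>j<m. y j * (\<Sum>r<m. adj_mat D $$ (j, r) * D $$ (r, c))) / det D"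
    by (simp add: sum_distrib_left sum_distrib_right sum_divide_distrib mult.assoc)
      (rule sum.swap)
  also have "\<dots> = (\<Sum>j<m. if j = c then y c * det D else 0) / det D"
    by (intro arg_cong[where f = "\<lambda>t. t / det D"] sum.cong) (simp_all add: adj_D)
  also have "\<dots> = y c"
    using c det by simp
  finally show ?thesis .
qed

definition cramer_coeff :: "nat \<Rightarrow> nat \<Rightarrow> rat mat \<Rightarrow> nat \<Rightarrow> rat" where
  "cramer_coeff n k x i =
     (\<Sum>j<n - Suc k. x $$ (k, j + Suc k) * adj_mat (trailing_submat n (Suc k) x) $$ (j, i - Suc k))
     / Delta_i n (Suc k) x"

definition elim_row :: "nat \<Rightarrow> nat \<Rightarrow> rat mat \<Rightarrow> nat \<Rightarrow> rat" where
  "elim_row n k x c =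
     (if k < c then cramer_coeff n k x c
      else x $$ (k, c) - (\<Sum>i=Suc k..<n. cramer_coeff n k x i * x $$ (i, c)))"

lemma loc_fun_cramer_coeff:
  assumes "Suc k \<le> i" "i < n"
  shows "loc_fun n (\<lambda>x. cramer_coeff n k x i)"
  unfolding cramer_coeff_def
proof (rule loc_fun_divide_Delta_i)
  show "(\<lambda>x. \<Sum>j<n - Suc k.
      x $$ (k, j + Suc k) * adj_mat (trailing_submat n (Suc k) x) $$ (j, i - Suc k)) \<in> int_polyfun n"
    using assms
    by (intro int_polyfun_sum int_polyfun.mult int_polyfun.var
        int_polyfun_adj_mat[OF trailing_submat_carrier int_polyfun_trailing_submat]) auto
qed (use assms in auto)

lemma loc_fun_elim_row:
  assumes "k < n" "c < n"
  shows "loc_fun n (\<lambda>x. elim_row n k x c)"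
proof (cases "k < c")
  case True
  then show ?thesis
    using loc_fun_cramer_coeff[of k c n] assms by (simp add: elim_row_def)
next
  case False
  have "loc_fun n (\<lambda>x. x $$ (k, c) - (\<Sum>i=Suc k..<n. cramer_coeff n k x i * x $$ (i, c)))"
    using assms
    by (intro loc_fun_diff loc_fun_sum loc_fun_mult loc_fun_cramer_coeff loc_fun_int_polyfun
        int_polyfun.var) auto
  then show ?thesis
    using False by (simp add: elim_row_def)
qed

lemma cramer_coeff_solves:
  assumes x: "x \<in> carrier_mat n n" and kc: "k < c" "c < n" and det: "Delta_i n (Suc k) x \<noteq> 0"
  shows "(\<Sum>i=Suc k..<n. cramer_coeff n k x i * x $$ (i, c)) = x $$ (k, c)"
proof -
  define D where "D = trailing_submat n (Suc k) x"
  have D: "D \<in> carrier_mat (n - Suc k) (n - Suc k)" "det D \<noteq> 0"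
    using det by (simp_all add: D_def trailing_submat_carrier Delta_i_eq_det)
  have "(\<Sum>i=Suc k..<n. cramer_coeff n k x i * x $$ (i, c))
      = (\<Sum>r<n - Suc k. cramer_coeff n k x (r + Suc k) * x $$ (r + Suc k, c))"
    by (rule sum.reindex_bij_witness[of _ "\<lambda>r. r + Suc k" "\<lambda>i. i - Suc k"]) auto
  also have "\<dots> = (\<Sum>r<n - Suc k. (\<Sum>j<n - Suc k. x $$ (k, j + Suc k) * adj_mat D $$ (j, r)) / det D
           * D $$ (r, c - Suc k))"
    using kc by (intro sum.cong)
      (simp_all add: cramer_coeff_def D_def Delta_i_eq_det trailing_submat_def)
  also have "\<dots> = x $$ (k, c - Suc k + Suc k)"
    using adj_mat_solve_row[OF D, of "c - Suc k" "\<lambda>j. x $$ (k, j + Suc k)"] kc by simp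
  finally show ?thesis
    using kc by simp
qed

definition row_replaced_id :: "nat \<Rightarrow> nat \<Rightarrow> (nat \<Rightarrow> rat) \<Rightarrow> rat mat" where
  "row_replaced_id n k v = mat n n (\<lambda>(r, c). if r = k then v c else if r = c then 1 else 0)"

definition top_rows_id :: "nat \<Rightarrow> nat \<Rightarrow> rat mat \<Rightarrow> rat mat" where
  "top_rows_id n k x = mat n n (\<lambda>(r, c). if r < k then (if r = c then 1 else 0) else x $$ (r, c))"

lemma row_replaced_id_carrier: "row_replaced_id n k v \<in> carrier_mat n n"
  by (simp add: row_replaced_id_def)

lemma top_rows_id_carrier: "top_rows_id n k x \<in> carrier_mat n n"
  by (simp add: top_rows_id_def)

lemma row_replaced_id_mult_top_rows_id:
  assumes k: "k < n"
    and v: "\<And>c. c < n \<Longrightarrow>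
      (if c \<le> k then v c else 0) + (\<Sum>i=Suc k..<n. v i * x $$ (i, c)) = x $$ (k, c)"
  shows "row_replaced_id n k v * top_rows_id n (Suc k) x = top_rows_id n k x"
proof (rule eq_matI)
  fix r c assume "r < dim_row (top_rows_id n k x)" "c < dim_col (top_rows_id n k x)"
  then have r: "r < n" and c: "c < n" by (simp_all add: top_rows_id_def)
  let ?R = "row_replaced_id n k v" and ?M = "top_rows_id n (Suc k) x"
  have prod: "(?R * ?M) $$ (r, c) = (\<Sum>i=0..<n. ?R $$ (r, i) * ?M $$ (i, c))"
    using r c by (simp add: row_replaced_id_def top_rows_id_def scalar_prod_def)
  show "(?R * ?M) $$ (r, c) = top_rows_id n k x $$ (r, c)"
  proof (cases "r = k")
    case False
    have "(\<Sum>i=0..<n. ?R $$ (r, i) * ?M $$ (i, c)) = (\<Sum>i=0..<n. if i = r then ?M $$ (r, c) else 0)"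
      using r False by (intro sum.cong) (auto simp: row_replaced_id_def)
    then show ?thesis
      using prod r c False by (simp add: top_rows_id_def)
  next
    case True
    have "(\<Sum>i=0..<n. ?R $$ (k, i) * ?M $$ (i, c)) = (\<Sum>i=0..<n. v i * ?M $$ (i, c))"
      using k by (intro sum.cong) (simp_all add: row_replaced_id_def)
    also have "\<dots> = (\<Sum>i=0..<Suc k. v i * ?M $$ (i, c)) + (\<Sum>i=Suc k..<n. v i * ?M $$ (i, c))"
      using k by (intro sum.atLeastLessThan_concat[symmetric]) simp_all
    also have "(\<Sum>i=0..<Suc k. v i * ?M $$ (i, c)) = (\<Sum>i=0..<Suc k. if i = c then v c else 0)"
      using k c by (intro sum.cong) (auto simp: top_rows_id_def)
    also have "\<dots> = (if c \<le> k then v c else 0)"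
      by (subst sum.delta) auto
    also have "(\<Sum>i=Suc k..<n. v i * ?M $$ (i, c)) = (\<Sum>i=Suc k..<n. v i * x $$ (i, c))"
      using c by (intro sum.cong) (auto simp: top_rows_id_def)
    finally show ?thesis
      using prod v[OF c] True r c by (simp add: top_rows_id_def)
  qed
qed (simp_all add: row_replaced_id_def top_rows_id_def)

lemma elim_row_factor:
  assumes x: "x \<in> carrier_mat n n" and k: "k < n" and det: "Delta_i n (Suc k) x \<noteq> 0"
  shows "row_replaced_id n k (elim_row n k x) * top_rows_id n (Suc k) x = top_rows_id n k x"
proof (rule row_replaced_id_mult_top_rows_id[OF k])
  fix c assume c: "c < n"
  have tail: "(\<Sum>i=Suc k..<n. elim_row n k x i * x $$ (i, c))
      = (\<Sum>i=Suc k..<n. cramer_coeff n k x i * x $$ (i, c))"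
    by (intro sum.cong) (auto simp: elim_row_def)
  show "(if c \<le> k then elim_row n k x c else 0) + (\<Sum>i=Suc k..<n. elim_row n k x i * x $$ (i, c))
      = x $$ (k, c)"
    using cramer_coeff_solves[OF x _ c det] by (simp add: tail elim_row_def)
qed

fun elim_prod :: "nat \<Rightarrow> rat mat \<Rightarrow> nat \<Rightarrow> rat mat" where
  "elim_prod n x 0 = 1\<^sub>m n"
| "elim_prod n x (Suc k) = elim_prod n x k * row_replaced_id n k (elim_row n k x)"

lemma elim_prod_carrier: "elim_prod n x k \<in> carrier_mat n n"
  by (induction k) (auto simp: row_replaced_id_carrier)

lemma elim_prod_mult_top_rows_id:
  assumes x: "x \<in> carrier_mat n n" and Delta: "Delta n x \<noteq> 0"
  shows "k \<le> n \<Longrightarrow> elim_prod n x k * top_rows_id n k x = x"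
proof (induction k)
  case 0
  have "top_rows_id n 0 x = x"
    using x by (intro eq_matI) (auto simp: top_rows_id_def)
  then show ?case
    using x by simp
next
  case (Suc k)
  have "elim_prod n x (Suc k) * top_rows_id n (Suc k) x
      = elim_prod n x k * (row_replaced_id n k (elim_row n k x) * top_rows_id n (Suc k) x)"
    by (simp add: assoc_mult_mat[OF elim_prod_carrier row_replaced_id_carrier top_rows_id_carrier])
  also have "\<dots> = elim_prod n x k * top_rows_id n k x"
    using Suc.prems Delta_i_nonzero[OF Delta, of "Suc k"] by (simp add: elim_row_factor[OF x])
  finally show ?case
    using Suc by simp
qed

lemma elim_prod_eq:
  assumes "x \<in> carrier_mat n n" "Delta n x \<noteq> 0"
  shows "elim_prod n x n = x"
proof -
  have "top_rows_id n n x = 1\<^sub>m n"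
    by (intro eq_matI) (auto simp: top_rows_id_def)
  then show ?thesis
    using elim_prod_mult_top_rows_id[OF assms order.refl] right_mult_one_mat[OF elim_prod_carrier]
    by simp
qed

definition perm_mat :: "nat \<Rightarrow> (nat \<Rightarrow> nat) \<Rightarrow> rat mat" where
  "perm_mat n \<sigma> = mat n n (\<lambda>(r, c). if r = \<sigma> c then 1 else 0)"

lemma perm_mat_carrier: "perm_mat n \<sigma> \<in> carrier_mat n n"
  by (simp add: perm_mat_def)

lemma perm_mat_in_perm_mats: "\<sigma> permutes {..<n} \<Longrightarrow> perm_mat n \<sigma> \<in> perm_mats n"
  unfolding perm_mats_def perm_mat_def by blast

lemma perm_mat_id: "perm_mat n id = 1\<^sub>m n"
  by (intro eq_matI) (auto simp: perm_mat_def)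

lemma mult_perm_mat:
  assumes A: "A \<in> carrier_mat n n" and \<sigma>: "\<sigma> permutes {..<n}"
  shows "A * perm_mat n \<sigma> = mat n n (\<lambda>(r, c). A $$ (r, \<sigma> c))"
proof (rule eq_matI)
  fix r c assume "r < dim_row (mat n n (\<lambda>(r, c). A $$ (r, \<sigma> c)))"
    "c < dim_col (mat n n (\<lambda>(r, c). A $$ (r, \<sigma> c)))"
  then have r: "r < n" and c: "c < n" by simp_all
  have "(A * perm_mat n \<sigma>) $$ (r, c) = (\<Sum>i=0..<n. A $$ (r, i) * perm_mat n \<sigma> $$ (i, c))"
    using A r c by (simp add: perm_mat_def scalar_prod_def)
  also have "\<dots> = (\<Sum>i=0..<n. if i = \<sigma> c then A $$ (r, \<sigma> c) else 0)"
    using c by (intro sum.cong) (auto simp: perm_mat_def)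
  also have "\<dots> = A $$ (r, \<sigma> c)"
    using c permutes_in_image[OF \<sigma>, of c] by (subst sum.delta) auto
  finally show "(A * perm_mat n \<sigma>) $$ (r, c) = mat n n (\<lambda>(r, c). A $$ (r, \<sigma> c)) $$ (r, c)"
    using r c by simp
qed (use A in \<open>simp_all add: perm_mat_def\<close>)

lemma perm_mat_mult:
  assumes A: "A \<in> carrier_mat n n" and \<sigma>: "\<sigma> permutes {..<n}"
  shows "perm_mat n \<sigma> * A = mat n n (\<lambda>(r, c). A $$ (Hilbert_Choice.inv \<sigma> r, c))"
proof (rule eq_matI)
  fix r c assume "r < dim_row (mat n n (\<lambda>(r, c). A $$ (Hilbert_Choice.inv \<sigma> r, c)))"
    "c < dim_col (mat n n (\<lambda>(r, c). A $$ (Hilbert_Choice.inv \<sigma> r, c)))"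
  then have r: "r < n" and c: "c < n" by simp_all
  have "(perm_mat n \<sigma> * A) $$ (r, c) = (\<Sum>i=0..<n. perm_mat n \<sigma> $$ (r, i) * A $$ (i, c))"
    using A r c by (simp add: perm_mat_def scalar_prod_def)
  also have "\<dots> = (\<Sum>i=0..<n. if i = Hilbert_Choice.inv \<sigma> r then A $$ (i, c) else 0)"
  proof (intro sum.cong refl)
    fix i assume "i \<in> {0..<n}"
    moreover have "r = \<sigma> i \<longleftrightarrow> i = Hilbert_Choice.inv \<sigma> r"
      using permutes_inv_eq[OF \<sigma>, of r i] by auto
    ultimately show "perm_mat n \<sigma> $$ (r, i) * A $$ (i, c)
        = (if i = Hilbert_Choice.inv \<sigma> r then A $$ (i, c) else 0)"
      using r by (simp add: perm_mat_def)
  qed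
  also have "\<dots> = A $$ (Hilbert_Choice.inv \<sigma> r, c)"
    using r permutes_in_image[OF permutes_inv[OF \<sigma>], of r] by (subst sum.delta) auto
  finally show "(perm_mat n \<sigma> * A) $$ (r, c)
      = mat n n (\<lambda>(r, c). A $$ (Hilbert_Choice.inv \<sigma> r, c)) $$ (r, c)"
    using r c by simp
qed (use A in \<open>simp_all add: perm_mat_def\<close>)

lemma perm_mat_mult_perm_mat:
  assumes "\<rho> permutes {..<n}"
  shows "perm_mat n \<sigma> * perm_mat n \<rho> = perm_mat n (\<sigma> \<circ> \<rho>)"
proof -
  have "perm_mat n \<sigma> * perm_mat n \<rho> = mat n n (\<lambda>(r, c). perm_mat n \<sigma> $$ (r, \<rho> c))"
    by (rule mult_perm_mat[OF perm_mat_carrier assms])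
  also have "\<dots> = perm_mat n (\<sigma> \<circ> \<rho>)"
    using permutes_in_image[OF assms] by (intro eq_matI) (simp_all add: perm_mat_def)
  finally show ?thesis .
qed

lemma s_mat_carrier: "s_mat n a b \<in> carrier_mat n n"
  by (simp add: s_mat_def)

lemma perm_mat_transpose_conj:
  assumes k: "k < n"
  shows "perm_mat n (Transposition.transpose 0 k)
      * s_mat n (v k) (\<lambda>j. v (Transposition.transpose 0 k (Suc j)))
      * perm_mat n (Transposition.transpose 0 k) = row_replaced_id n k v"
    (is "perm_mat n ?t * ?S * _ = _")
proof (rule eq_matI)
  have t: "?t permutes {..<n}"
    using k by (intro permutes_swap_id) auto
  fix r c assume "r < dim_row (row_replaced_id n k v)" "c < dim_col (row_replaced_id n k v)"
  then have r: "r < n" and c: "c < n" by (simp_all add: row_replaced_id_def)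
  have "(perm_mat n ?t * ?S * perm_mat n ?t) $$ (r, c) = ?S $$ (?t r, ?t c)"
    using r c permutes_in_image[OF t]
    by (simp add: perm_mat_mult[OF _ t] mult_perm_mat[OF _ t] s_mat_def)
  also have "\<dots> = row_replaced_id n k v $$ (r, c)"
  proof -
    have t_zero: "?t i = 0 \<longleftrightarrow> i = k" for i
      by (auto simp: transpose_eq_iff)
    have "?t r = ?t c \<longleftrightarrow> r = c"
      by (auto dest: transpose_eq_imp_eq)
    moreover have "c \<noteq> k \<Longrightarrow> Suc (?t c - 1) = ?t c"
      using t_zero[of c] by simp
    ultimately show ?thesis
      using r c k permutes_in_image[OF t] by (simp add: s_mat_def row_replaced_id_def t_zero)
  qed
  finally show "(perm_mat n ?t * ?S * perm_mat n ?t) $$ (r, c) = row_replaced_id n k v $$ (r, c)" .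
qed (simp_all add: perm_mat_def row_replaced_id_def)

text \<open>Padding by \<open>id\<close> for \<open>k \<ge> n\<close> (and the truncated \<open>0 - 1 = 0\<close> in \<open>elim_perm\<close>) makes the
  outer factors \<open>w\<^sub>0\<close> and \<open>w\<^sub>n\<close> single transpositions.\<close>

definition pivot_swap :: "nat \<Rightarrow> nat \<Rightarrow> nat \<Rightarrow> nat" where
  "pivot_swap n k = (if k < n then Transposition.transpose 0 k else id)"

lemma pivot_swap_permutes: "pivot_swap n k permutes {..<n}"
  by (auto simp: pivot_swap_def intro: permutes_swap_id)

definition elim_perm :: "nat \<Rightarrow> nat \<Rightarrow> rat mat" where
  "elim_perm n i = perm_mat n (pivot_swap n (i - 1) \<circ> pivot_swap n i)"

definition elim_pivot :: "nat \<Rightarrow> nat \<Rightarrow> rat mat \<Rightarrow> rat" where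
  "elim_pivot n i x = elim_row n (i - 1) x (i - 1)"

definition elim_tail :: "nat \<Rightarrow> nat \<Rightarrow> rat mat \<Rightarrow> nat \<Rightarrow> rat" where
  "elim_tail n i x j = elim_row n (i - 1) x (Transposition.transpose 0 (i - 1) (Suc j))"

lemma elim_perm_in_perm_mats: "elim_perm n i \<in> perm_mats n"
  unfolding elim_perm_def
  by (intro perm_mat_in_perm_mats permutes_compose pivot_swap_permutes)

lemma loc_fun_elim_pivot: "1 \<le> i \<Longrightarrow> i \<le> n \<Longrightarrow> loc_fun n (elim_pivot n i)"
  unfolding elim_pivot_def[abs_def] by (rule loc_fun_elim_row) auto

lemma loc_fun_elim_tail:
  "1 \<le> i \<Longrightarrow> i \<le> n \<Longrightarrow> j < n - 1 \<Longrightarrow> loc_fun n (\<lambda>x. elim_tail n i x j)"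
  unfolding elim_tail_def
  by (rule loc_fun_elim_row) (auto simp: Transposition.transpose_def)

lemma chain_elim_factors:
  "k \<le> n \<Longrightarrow> chain (elim_perm n) (\<lambda>i. s_mat n (elim_pivot n i x) (elim_tail n i x)) k
     = elim_prod n x k * perm_mat n (pivot_swap n k)"
proof (induction k)
  case 0
  have "pivot_swap n 0 = id"
    by (simp add: pivot_swap_def)
  then show ?case
    by (simp only: chain.simps elim_prod.simps elim_perm_def diff_0_eq_0 comp_id perm_mat_id)
      simp
next
  case (Suc k)
  then have k: "k < n" by simp
  let ?E = "elim_prod n x k" and ?P = "perm_mat n (Transposition.transpose 0 k)"
    and ?P' = "perm_mat n (pivot_swap n (Suc k))"
    and ?S = "s_mat n (elim_pivot n (Suc k) x) (elim_tail n (Suc k) x)"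
  have S: "?S = s_mat n (elim_row n k x k) (\<lambda>j. elim_row n k x (Transposition.transpose 0 k (Suc j)))"
    by (simp add: elim_pivot_def elim_tail_def[abs_def])
  have "elim_perm n (Suc k) = ?P * ?P'"
    using k pivot_swap_permutes
    by (simp add: elim_perm_def pivot_swap_def perm_mat_mult_perm_mat)
  then have "chain (elim_perm n) (\<lambda>i. s_mat n (elim_pivot n i x) (elim_tail n i x)) (Suc k)
      = ?E * ?P * ?S * (?P * ?P')"
    using Suc k by (simp add: pivot_swap_def)
  also have "\<dots> = ?E * (?P * ?S * ?P) * ?P'"
  proof -
    have carriers: "?E \<in> carrier_mat n n" "?P \<in> carrier_mat n n" "?S \<in> carrier_mat n n"
      "?P' \<in> carrier_mat n n"
      by (simp_all add: elim_prod_carrier perm_mat_carrier s_mat_carrier)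
    then show ?thesis
      by (simp add: assoc_mult_mat[of _ n n _ n _ n])
  qed
  also have "\<dots> = elim_prod n x (Suc k) * ?P'"
    using perm_mat_transpose_conj[OF k, of "elim_row n k x"] by (simp add: S)
  finally show ?case .
qed

lemma elim_factorization:
  assumes "x \<in> carrier_mat n n" "Delta n x \<noteq> 0"
  shows "x = chain (elim_perm n) (\<lambda>i. s_mat n (elim_pivot n i x) (elim_tail n i x)) n"
  using chain_elim_factors[of n n x] elim_prod_eq[OF assms] assms(1)
  by (simp add: pivot_swap_def perm_mat_id)

theorem lemma3p9:
  fixes n :: nat
  assumes "n \<ge> 1"
  shows "\<exists>(N::nat) (w :: nat \<Rightarrow> rat mat) (a :: nat \<Rightarrow> rat mat \<Rightarrow> rat)
            (b :: nat \<Rightarrow> rat mat \<Rightarrow> nat \<Rightarrow> rat).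
     (\<forall>i\<le>N. w i \<in> perm_mats n) \<and>
     (\<forall>i\<in>{1..N}. loc_fun n (a i) \<and> (\<forall>j<n-1. loc_fun n (\<lambda>x. b i x j))) \<and>
     (\<forall>x \<in> carrier_mat n n. Delta n x \<noteq> 0 \<longrightarrow>
        x = chain w (\<lambda>i. s_mat n (a i x) (b i x)) N)"
proof (intro exI conjI)
  show "\<forall>i\<le>n. elim_perm n i \<in> perm_mats n"
    by (simp add: elim_perm_in_perm_mats)
  show "\<forall>i\<in>{1..n}. loc_fun n (elim_pivot n i) \<and> (\<forall>j<n - 1. loc_fun n (\<lambda>x. elim_tail n i x j))"
    by (auto intro: loc_fun_elim_pivot loc_fun_elim_tail)
  show "\<forall>x\<in>carrier_mat n n. Delta n x \<noteq> 0 \<longrightarrow>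
      x = chain (elim_perm n) (\<lambda>i. s_mat n (elim_pivot n i x) (elim_tail n i x)) n"
    by (simp add: elim_factorization)
qed

end
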